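(* Let $\varLambda\subseteq\mathbb{Z}$ be relatively dense in $\mathbb{R}$, and assume that the density autocorrelation $\gamma:=\gamma_{\mathrm{dens}}$ of $\varLambda$ exists with respect to $\mathcal{A}=([-n,n])_n$. For each $n\ge3$ set $\varGamma_n=n!+(\varLambda\cap[-n,n])$ and define $\varGamma=\bigcup_{n\ge3}\varGamma_n$ (a disjoint union). Then, with respect to $\mathcal{A}$: (a) the density of $\varGamma$ exists and equals $0$, i.e. $\lim_{n\to\infty}\frac{\mathrm{card}(\varGamma\cap[-n,n])}{2n}=0$; (b) the counting autocorrelation of $\varGamma$ exists and $\gamma_{\mathrm{count}}=C\gamma$, where $C=\frac{1}{\gamma(\{0\})}=\frac{1}{\mathrm{dens}(\varLambda)}\neq0$, with $\mathrm{dens}(\varLambda)=\lim_{n\to\infty}\frac{\mathrm{card}(\varLambda\cap[-n,n])}{2n}$.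
   Context: For a locally finite $X\subseteq\mathbb{R}$ and $A_n=[-n,n]$, let $F_n=X\cap A_n$. The density autocorrelation of $X$ is the vague limit (convergence on all compactly supported continuous functions) $\gamma_{\mathrm{dens}}=\lim_n\frac{1}{2n}\sum_{x,y\in F_n}\delta_{x-y}$, and the counting autocorrelation is the vague limit $\gamma_{\mathrm{count}}=\lim_n\gamma_{F_n}$, where $\gamma_F=\frac{1}{\mathrm{card}(F)}\sum_{x,y\in F}\delta_{x-y}$ for finite nonempty $F$ and $\gamma_\emptyset=0$. Relatively dense means there is $R>0$ such that every interval of length $R$ meets $\varLambda$. *)

theory Defs
  imports "HOL-Analysis.Analysis"
begin

definition window :: "real set \<Rightarrow> nat \<Rightarrow> real set" where
  "window X n = X \<inter> {- real n .. real n}"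

definition rel_dense :: "real set \<Rightarrow> bool" where
  "rel_dense L \<longleftrightarrow> (\<exists>R>0. \<forall>a. \<exists>x\<in>L. a \<le> x \<and> x \<le> a + R)"

definition test_fun :: "(real \<Rightarrow> real) \<Rightarrow> bool" where
  "test_fun \<phi> \<longleftrightarrow> continuous_on UNIV \<phi> \<and> compact (closure {x. \<phi> x \<noteq> 0})"

text \<open>The finite measure \<open>\<Sum>_{x,y\<in>F} \<delta>_{x-y}\<close>, acting on a test function.\<close>
definition diff_sum :: "real set \<Rightarrow> (real \<Rightarrow> real) \<Rightarrow> real" where
  "diff_sum F \<phi> = (\<Sum>p\<in>F \<times> F. \<phi> (fst p - snd p))"

definition gamma_fin :: "real set \<Rightarrow> (real \<Rightarrow> real) \<Rightarrow> real" where
  "gamma_fin F \<phi> = (if F = {} then 0 else diff_sum F \<phi> / real (card F))"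

text \<open>Vague convergence of a sequence of (finite, given as functionals) measures to a
  locally finite Borel measure \<open>\<gamma>\<close> on \<open>\<real>\<close>.\<close>
definition vague_limit :: "(nat \<Rightarrow> (real \<Rightarrow> real) \<Rightarrow> real) \<Rightarrow> real measure \<Rightarrow> bool" where
  "vague_limit \<mu> \<gamma> \<longleftrightarrow>
     sets \<gamma> = sets borel \<and> (\<forall>K. compact K \<longrightarrow> emeasure \<gamma> K < \<infinity>) \<and>
     (\<forall>\<phi>. test_fun \<phi> \<longrightarrow> (\<lambda>n. \<mu> n \<phi>) \<longlonglongrightarrow> integral\<^sup>L \<gamma> \<phi>)"

definition is_dens_autocorr :: "real set \<Rightarrow> real measure \<Rightarrow> bool" where
  "is_dens_autocorr X \<gamma> \<longleftrightarrow>
     vague_limit (\<lambda>n \<phi>. diff_sum (window X n) \<phi> / (2 * real n)) \<gamma>"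

definition is_count_autocorr :: "real set \<Rightarrow> real measure \<Rightarrow> bool" where
  "is_count_autocorr X \<gamma> \<longleftrightarrow> vague_limit (\<lambda>n \<phi>. gamma_fin (window X n) \<phi>) \<gamma>"

definition has_density :: "real set \<Rightarrow> real \<Rightarrow> bool" where
  "has_density X d \<longleftrightarrow> (\<lambda>n. real (card (window X n)) / (2 * real n)) \<longlonglongrightarrow> d"

end

theory Submission
  imports Defs
begin

(*
  The blocks \<Gamma>_m = m! + (\<Lambda> \<inter> [-m,m]) lie in [m! - m, m! + m]; block m is at distance at
  least m from all earlier ones, and [-n,n] contains the blocks below some index M = M(n) in
  full, part of block M, and nothing else. For a test function \<phi> supported in [-K,K], the pair
  sum of \<Gamma> \<inter> [-n,n] against \<phi> is therefore \<Sum>_{m<M} diff_sum (\<Lambda> \<inter> [-m,m]) \<phi> up to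
  the contribution of the cut block, which has O(M) points; likewise for the number of points.
  The m-th terms are asymptotic to 2m \<gamma>(\<phi>) and 2m dens(\<Lambda>), so by the Stolz-Cesaro theorem the
  counting autocorrelation is \<gamma>(\<phi>) / dens(\<Lambda>), the error being negligible against the
  denominator, which grows like M^2 dens(\<Lambda>).
  On a set of integers the tent functions of width 1/(k+1) just count points, and they decrease
  to the indicator of {0}; hence dens(\<Lambda>) = \<gamma>{0}, which is positive as \<Lambda> is relatively
  dense. Finally \<Gamma> has density 0, as [-n,n] meets only M blocks, i.e. O(M^2) points, while
  n \<ge> (M-1)!.
*)

section \<open>Test functions and difference sums\<close>

lemma test_funI:
  assumes "continuous_on UNIV \<phi>" "\<And>x. K < \<bar>x\<bar> \<Longrightarrow> \<phi> x = 0"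
  shows "test_fun \<phi>"
proof -
  have "closure {x. \<phi> x \<noteq> 0} \<subseteq> {-K..K}"
    using assms(2) by (intro closure_minimal) (force, simp)
  then show ?thesis
    unfolding test_fun_def using assms(1) compact_Icc
    by (meson bounded_subset closed_closure compact_eq_bounded_closed)
qed

lemma test_fun_boundedE:
  assumes "test_fun \<phi>"
  obtains K :: nat and B :: real
  where "\<And>x. real K < \<bar>x\<bar> \<Longrightarrow> \<phi> x = 0" and "\<And>x. \<bar>\<phi> x\<bar> \<le> B"
proof -
  let ?S = "closure {x. \<phi> x \<noteq> 0}"
  have cpt: "compact ?S" and cont: "continuous_on UNIV \<phi>"
    using assms unfolding test_fun_def by auto
  obtain b where b: "\<And>x. x \<in> ?S \<Longrightarrow> \<bar>x\<bar> \<le> b"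
    using compact_imp_bounded[OF cpt] by (auto simp: bounded_iff)
  obtain B where B: "\<And>x. x \<in> ?S \<Longrightarrow> \<bar>\<phi> x\<bar> \<le> B"
    using compact_imp_bounded[OF compact_continuous_image[OF continuous_on_subset[OF cont] cpt]]
    by (auto simp: bounded_iff)
  show ?thesis
  proof
    fix x assume "real (nat \<lceil>b\<rceil>) < \<bar>x\<bar>"
    moreover have "b \<le> real (nat \<lceil>b\<rceil>)" by linarith
    ultimately show "\<phi> x = 0"
      using b[of x] closure_subset[of "{x. \<phi> x \<noteq> 0}"] by force
  next
    fix x show "\<bar>\<phi> x\<bar> \<le> max B 0"
      using B[of x] closure_subset[of "{x. \<phi> x \<noteq> 0}"] by (cases "\<phi> x = 0") auto
  qed
qed

definition tent :: "nat \<Rightarrow> real \<Rightarrow> real" where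
  "tent k x = max 0 (1 - real (Suc k) * \<bar>x\<bar>)"

lemma tent_eq_0: "1 \<le> real (Suc k) * \<bar>x\<bar> \<Longrightarrow> tent k x = 0"
  by (simp add: tent_def)

lemma tent_eq_0_outside: "1 \<le> \<bar>x\<bar> \<Longrightarrow> tent k x = 0"
  using mult_mono[of 1 "real (Suc k)" 1 "\<bar>x\<bar>"] by (intro tent_eq_0) simp

lemma continuous_on_tent: "continuous_on UNIV (tent k)"
  unfolding tent_def by (intro continuous_intros)

lemma test_fun_tent: "test_fun (tent k)"
  by (rule test_funI[OF continuous_on_tent, of 1]) (simp add: tent_eq_0_outside)

lemma tent_Ints: "x \<in> \<int> \<Longrightarrow> tent k x = indicator {0} x"
  by (cases "x = 0") (simp_all add: tent_def[of k 0] tent_eq_0_outside Ints_nonzero_abs_ge1)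

lemma abs_tent_le_indicator: "\<bar>tent k x\<bar> \<le> indicator {-1..1} x"
proof (cases "\<bar>x\<bar> < 1")
  case False
  then show ?thesis by (simp add: tent_eq_0_outside)
qed (auto simp: tent_def indicator_def)

lemma tent_tendsto_indicator: "(\<lambda>k. tent k x) \<longlonglongrightarrow> indicator {0} x"
proof (cases "x = 0")
  case False
  obtain N :: nat where N: "1 / \<bar>x\<bar> < real N" using reals_Archimedean2 by blast
  have "tent k x = 0" if "N \<le> k" for k
  proof (rule tent_eq_0)
    have "1 / \<bar>x\<bar> < real (Suc k)" using N that by linarith
    then show "1 \<le> real (Suc k) * \<bar>x\<bar>" using False by (simp add: field_simps)
  qed
  then have "\<forall>\<^sub>F k in sequentially. tent k x = 0"
    by (auto simp: eventually_sequentially)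
  then show ?thesis
    using False by (simp add: tendsto_eventually)
qed (simp add: tent_def)

lemma diff_sum_eq_double_sum: "diff_sum F \<phi> = (\<Sum>x\<in>F. \<Sum>y\<in>F. \<phi> (x - y))"
  unfolding diff_sum_def by (simp add: sum.cartesian_product case_prod_unfold)

lemma diff_sum_translate: "diff_sum ((+) c ` F) \<phi> = diff_sum F \<phi>"
proof -
  have inj: "inj_on ((+) c) A" for A :: "real set"
    by (simp add: inj_on_def)
  show ?thesis
    unfolding diff_sum_eq_double_sum by (simp add: sum.reindex[OF inj])
qed

lemma diff_sum_Un_separated:
  assumes "finite A" "finite B" "A \<inter> B = {}"
    and "\<And>x y. x \<in> A \<Longrightarrow> y \<in> B \<Longrightarrow> \<phi> (x - y) = 0 \<and> \<phi> (y - x) = 0"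
  shows "diff_sum (A \<union> B) \<phi> = diff_sum A \<phi> + diff_sum B \<phi>"
proof -
  have "(\<Sum>x\<in>A. \<Sum>y\<in>B. \<phi> (x - y)) = 0" "(\<Sum>x\<in>B. \<Sum>y\<in>A. \<phi> (x - y)) = 0"
    using assms(4) by (auto intro!: sum.neutral)
  then show ?thesis
    using assms(1-3) by (simp add: diff_sum_eq_double_sum sum.union_disjoint sum.distrib)
qed

lemma window_subset_Ints:
  assumes "\<Lambda> \<subseteq> \<int>"
  shows "window \<Lambda> n \<subseteq> of_int ` {- int n .. int n}"
proof
  fix x assume "x \<in> window \<Lambda> n"
  then have x: "x \<in> \<int>" "\<bar>x\<bar> \<le> real n"
    using assms by (auto simp: window_def)
  then obtain j where "x = of_int j" by (auto elim: Ints_cases)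
  with x show "x \<in> of_int ` {- int n .. int n}"
    by (intro image_eqI[of _ _ j]) auto
qed

lemma finite_window: "\<Lambda> \<subseteq> \<int> \<Longrightarrow> finite (window \<Lambda> n)"
  by (rule finite_subset[OF window_subset_Ints]) auto

lemma card_window_le:
  assumes "\<Lambda> \<subseteq> \<int>"
  shows "card (window \<Lambda> n) \<le> 2 * n + 1"
proof -
  have "card (window \<Lambda> n) \<le> card (of_int ` {- int n .. int n} :: real set)"
    using window_subset_Ints[OF assms] by (intro card_mono) auto
  also have "\<dots> \<le> card {- int n .. int n}"
    by (rule card_image_le) simp
  finally show ?thesis by simp
qed

lemma diff_sum_tent:
  assumes "F \<subseteq> \<int>" "finite F"
  shows "diff_sum F (tent k) = real (card F)"
proof -
  have "tent k (x - y) = (if x = y then 1 else 0)" if "x \<in> F" "y \<in> F" for x y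
    using that assms(1) by (subst tent_Ints) (auto simp: indicator_def intro: Ints_diff)
  then show ?thesis
    using assms(2) by (simp add: diff_sum_eq_double_sum)
qed

lemma card_Ints_near_le:
  assumes "F \<subseteq> \<int>" "x \<in> \<int>"
  shows "card {y \<in> F. \<bar>x - y\<bar> \<le> real K} \<le> 2 * K + 1"
proof -
  have "{y \<in> F. \<bar>x - y\<bar> \<le> real K} \<subseteq> (\<lambda>j. x + of_int j) ` {- int K .. int K}"
  proof
    fix y assume y: "y \<in> {y \<in> F. \<bar>x - y\<bar> \<le> real K}"
    have "y - x \<in> \<int>"
      using y assms by (auto intro: Ints_diff)
    then obtain j where "y - x = of_int j" by (auto elim: Ints_cases)
    with y show "y \<in> (\<lambda>j. x + of_int j) ` {- int K .. int K}"
      by (intro image_eqI[of _ _ j]) auto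
  qed
  then have "card {y \<in> F. \<bar>x - y\<bar> \<le> real K} \<le> card ((\<lambda>j. x + of_int j) ` {- int K .. int K})"
    by (intro card_mono) auto
  also have "\<dots> \<le> card {- int K .. int K}"
    by (rule card_image_le) simp
  finally show ?thesis by simp
qed

lemma abs_diff_sum_le:
  assumes "F \<subseteq> \<int>" "finite F"
    and "\<And>x. real K < \<bar>x\<bar> \<Longrightarrow> \<phi> x = 0" "\<And>x. \<bar>\<phi> x\<bar> \<le> B"
  shows "\<bar>diff_sum F \<phi>\<bar> \<le> real (card F) * (real (2 * K + 1) * B)"
proof -
  have row: "\<bar>\<Sum>y\<in>F. \<phi> (x - y)\<bar> \<le> real (2 * K + 1) * B" if "x \<in> F" for x
  proof -
    let ?near = "{y \<in> F. \<bar>x - y\<bar> \<le> real K}"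
    have "\<phi> (x - y) = 0" if "y \<in> F - ?near" for y
      using that assms(3) by auto
    then have "(\<Sum>y\<in>F. \<phi> (x - y)) = (\<Sum>y\<in>?near. \<phi> (x - y))"
      using assms(2) by (intro sum.mono_neutral_right) auto
    also have "\<bar>\<dots>\<bar> \<le> (\<Sum>y\<in>?near. B)"
      using assms(4) by (intro order_trans[OF sum_abs] sum_mono) auto
    also have "\<dots> = real (card ?near) * B"
      by simp
    also have "\<dots> \<le> real (2 * K + 1) * B"
    proof (rule mult_right_mono)
      show "real (card ?near) \<le> real (2 * K + 1)"
        using card_Ints_near_le[OF assms(1)] that assms(1) by (simp only: of_nat_le_iff) blast
      show "0 \<le> B"
        using assms(4)[of 0] by linarith
    qed
    finally show ?thesis .
  qed
  have "\<bar>diff_sum F \<phi>\<bar> \<le> (\<Sum>x\<in>F. \<bar>\<Sum>y\<in>F. \<phi> (x - y)\<bar>)"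
    unfolding diff_sum_eq_double_sum by (rule sum_abs)
  also have "\<dots> \<le> (\<Sum>x\<in>F. real (2 * K + 1) * B)"
    using row by (rule sum_mono)
  finally show ?thesis by simp
qed

section \<open>The density of \<Lambda>\<close>

lemma integral_tent_tendsto:
  assumes "sets \<gamma> = sets borel" "emeasure \<gamma> {-1..1::real} < \<infinity>"
  shows "(\<lambda>k. integral\<^sup>L \<gamma> (tent k)) \<longlonglongrightarrow> measure \<gamma> {0}"
proof -
  have "(\<lambda>k. integral\<^sup>L \<gamma> (tent k)) \<longlonglongrightarrow> integral\<^sup>L \<gamma> (indicator {0})"
  proof (rule integral_dominated_convergence[where w = "indicator {-1..1}"])
    show "tent k \<in> borel_measurable \<gamma>" for k
      unfolding measurable_cong_sets[OF assms(1) refl]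
      by (rule borel_measurable_continuous_onI[OF continuous_on_tent])
    show "integrable \<gamma> (indicator {-1..1} :: real \<Rightarrow> real)"
      using assms by (intro integrable_real_indicator) auto
  qed (use assms(1) abs_tent_le_indicator tent_tendsto_indicator in auto)
  then show ?thesis
    using assms(1) by (simp add: sets_eq_imp_space_eq)
qed

lemma is_dens_autocorr_density:
  assumes "\<Lambda> \<subseteq> \<int>" "is_dens_autocorr \<Lambda> \<gamma>"
  shows "has_density \<Lambda> (measure \<gamma> {0})"
proof -
  have sets: "sets \<gamma> = sets borel" and fin: "emeasure \<gamma> {-1..1::real} < \<infinity>"
    and lim: "\<And>\<phi>. test_fun \<phi> \<Longrightarrow>
      (\<lambda>n. diff_sum (window \<Lambda> n) \<phi> / (2 * real n)) \<longlonglongrightarrow> integral\<^sup>L \<gamma> \<phi>"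
    using assms(2) unfolding is_dens_autocorr_def vague_limit_def by auto
  have "diff_sum (window \<Lambda> n) (tent k) = real (card (window \<Lambda> n))" for n k
    using assms(1) by (intro diff_sum_tent finite_window) (auto simp: window_def)
  then have tent_lim: "(\<lambda>n. real (card (window \<Lambda> n)) / (2 * real n)) \<longlonglongrightarrow> integral\<^sup>L \<gamma> (tent k)" for k
    using lim[OF test_fun_tent] by simp
  then have "integral\<^sup>L \<gamma> (tent k) = integral\<^sup>L \<gamma> (tent 0)" for k
    using LIMSEQ_unique by blast
  then have "(\<lambda>k. integral\<^sup>L \<gamma> (tent k)) = (\<lambda>_. integral\<^sup>L \<gamma> (tent 0))"
    by (intro ext)
  then have "(\<lambda>_. integral\<^sup>L \<gamma> (tent 0)) \<longlonglongrightarrow> measure \<gamma> {0}"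
    using integral_tent_tendsto[OF sets fin] by metis
  then show ?thesis
    unfolding has_density_def using tent_lim[of 0] by (simp add: LIMSEQ_const_iff)
qed

lemma card_window_ge:
  fixes P :: nat
  assumes "finite (window \<Lambda> n)" "0 < P" "\<And>a. \<exists>x\<in>\<Lambda>. a \<le> x \<and> x < a + real P"
  shows "2 * real n / real P - 2 \<le> real (card (window \<Lambda> n))"
proof -
  obtain g where g: "\<And>a. g a \<in> \<Lambda> \<and> a \<le> g a \<and> g a < a + real P"
    using assms(3) by metis
  define J where "J = int (n div P)"
  define h where "h j = g (of_int j * real P)" for j
  have "real (n div P * P) \<le> real n"
    by (simp only: of_nat_le_iff div_times_less_eq_dividend)
  then have JP: "real_of_int J * real P \<le> real n"
    by (simp add: J_def)
  have into_window: "h ` {-J..<J} \<subseteq> window \<Lambda> n"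
  proof safe
    fix j assume j: "j \<in> {-J..<J}"
    have "real_of_int (-J) * real P \<le> of_int j * real P" "of_int (j + 1) * real P \<le> of_int J * real P"
      using j by (intro mult_right_mono; simp)+
    then show "h j \<in> window \<Lambda> n"
      using g[of "of_int j * real P"] JP unfolding h_def window_def by (auto simp: algebra_simps)
  qed
  have "inj_on h {-J..<J}"
  proof (rule inj_on_inverseI)
    fix j
    have "of_int j \<le> h j / real P" "h j / real P < of_int j + 1"
      using g[of "of_int j * real P"] assms(2) unfolding h_def by (auto simp: field_simps)
    then show "\<lfloor>h j / real P\<rfloor> = j" by (simp add: floor_eq_iff)
  qed
  then have "card {-J..<J} \<le> card (window \<Lambda> n)"
    using into_window assms(1) by (rule card_inj_on_le)
  then have card_ge: "2 * real (n div P) \<le> real (card (window \<Lambda> n))"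
    by (simp add: J_def)
  have "n < n div P * P + P"
    using div_mult_mod_eq[of n P] mod_less_divisor[OF assms(2), of n] by linarith
  then have "real n < real (n div P) * real P + real P"
    by (metis of_nat_add of_nat_less_iff of_nat_mult)
  then have "2 * real n / real P - 2 < 2 * real (n div P)"
    using assms(2) by (simp add: field_simps)
  with card_ge show ?thesis by linarith
qed

lemma rel_dense_density_pos:
  assumes "\<Lambda> \<subseteq> \<int>" "rel_dense \<Lambda>" "has_density \<Lambda> d"
  shows "0 < d"
proof -
  obtain R where R: "\<And>a. \<exists>x\<in>\<Lambda>. a \<le> x \<and> x \<le> a + R"
    using assms(2) unfolding rel_dense_def by blast
  define P where "P = Suc (nat \<lceil>R\<rceil>)"
  have "R < real P"
    unfolding P_def using real_nat_ceiling_ge[of R] by simp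
  then have hit: "\<exists>x\<in>\<Lambda>. a \<le> x \<and> x < a + real P" for a
    using R[of a] by force
  have "\<forall>\<^sub>F n in sequentially. 1 / real P - 1 / real n \<le> real (card (window \<Lambda> n)) / (2 * real n)"
  proof (rule eventually_sequentiallyI[of 1])
    fix n :: nat assume "1 \<le> n"
    then have "1 / real P - 1 / real n = (2 * real n / real P - 2) / (2 * real n)"
      by (simp add: field_simps)
    also have "\<dots> \<le> real (card (window \<Lambda> n)) / (2 * real n)"
      using card_window_ge[OF finite_window[OF assms(1)] _ hit] by (intro divide_right_mono) (auto simp: P_def)
    finally show "1 / real P - 1 / real n \<le> real (card (window \<Lambda> n)) / (2 * real n)" .
  qed
  moreover have "(\<lambda>n. 1 / real P - 1 / real n) \<longlonglongrightarrow> 1 / real P - 0"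
    by (intro tendsto_intros lim_1_over_n)
  ultimately have "1 / real P \<le> d"
    using assms(3) unfolding has_density_def by (intro tendsto_le) auto
  moreover have "0 < 1 / real P"
    by (simp add: P_def)
  ultimately show ?thesis
    by linarith
qed

lemma filterlim_card_window:
  assumes "has_density \<Lambda> c" "0 < c"
  shows "filterlim (\<lambda>m. real (card (window \<Lambda> m))) at_top sequentially"
proof (rule filterlim_at_top_mono)
  have "filterlim (\<lambda>m. 2 * real m) at_top sequentially"
    by (intro filterlim_tendsto_pos_mult_at_top[OF tendsto_const] filterlim_real_sequentially) simp
  then show "filterlim (\<lambda>m. real (card (window \<Lambda> m)) / (2 * real m) * (2 * real m)) at_top sequentially"
    using filterlim_tendsto_pos_mult_at_top[OF assms(1)[unfolded has_density_def] assms(2)] by blast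
  show "\<forall>\<^sub>F m in sequentially. real (card (window \<Lambda> m)) / (2 * real m) * (2 * real m)
      \<le> real (card (window \<Lambda> m))"
    by (intro always_eventually allI) simp
qed

section \<open>The Stolz-Cesaro theorem\<close>

lemma abs_diff_le_telescope:
  fixes u v :: "nat \<Rightarrow> real"
  assumes "\<And>n. N \<le> n \<Longrightarrow> \<bar>u (Suc n) - u n\<bar> \<le> v (Suc n) - v n" "N \<le> n"
  shows "\<bar>u n - u N\<bar> \<le> v n - v N"
  using assms(2)
proof (induction n rule: dec_induct)
  case (step n)
  with assms(1)[OF step(1)] show ?case
    by (simp only: abs_le_iff) linarith
qed simp

lemma linear_bound_from_increment_ratio:
  fixes a b :: "nat \<Rightarrow> real"
  assumes "\<forall>\<^sub>F n in sequentially. b n < b (Suc n) \<and> \<bar>(a (Suc n) - a n) / (b (Suc n) - b n) - L\<bar> < e"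
  obtains C where "\<forall>\<^sub>F n in sequentially. \<bar>a n - L * b n\<bar> \<le> C + e * b n"
proof -
  obtain N where N: "\<And>n. N \<le> n \<Longrightarrow> b n < b (Suc n) \<and> \<bar>(a (Suc n) - a n) / (b (Suc n) - b n) - L\<bar> < e"
    using assms by (auto simp: eventually_sequentially)
  have "\<bar>(a (Suc n) - L * b (Suc n)) - (a n - L * b n)\<bar> \<le> e * b (Suc n) - e * b n" if "N \<le> n" for n
  proof -
    have "0 < b (Suc n) - b n" using N[OF that] by simp
    moreover have "(a (Suc n) - L * b (Suc n)) - (a n - L * b n)
        = ((a (Suc n) - a n) / (b (Suc n) - b n) - L) * (b (Suc n) - b n)"
      using calculation by (simp add: field_simps)
    ultimately have "\<bar>(a (Suc n) - L * b (Suc n)) - (a n - L * b n)\<bar> \<le> e * (b (Suc n) - b n)"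
      using N[OF that] by (simp add: abs_mult mult_right_mono)
    then show ?thesis
      by (simp only: right_diff_distrib)
  qed
  then have "\<bar>(a n - L * b n) - (a N - L * b N)\<bar> \<le> e * b n - e * b N" if "N \<le> n" for n
    using that by (rule abs_diff_le_telescope)
  then have "\<bar>a n - L * b n\<bar> \<le> (\<bar>a N - L * b N\<bar> + \<bar>e * b N\<bar>) + e * b n" if "N \<le> n" for n
    using that abs_ge_self[of "a N - L * b N"] abs_ge_minus_self[of "a N - L * b N"]
      abs_ge_minus_self[of "e * b N"]
    by (simp only: abs_le_iff) fastforce
  then show ?thesis
    by (intro that eventually_sequentiallyI)
qed

theorem Stolz_Cesaro:
  fixes a b :: "nat \<Rightarrow> real"
  assumes incr: "\<forall>\<^sub>F n in sequentially. b n < b (Suc n)"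
    and b: "filterlim b at_top sequentially"
    and lim: "(\<lambda>n. (a (Suc n) - a n) / (b (Suc n) - b n)) \<longlonglongrightarrow> L"
  shows "(\<lambda>n. a n / b n) \<longlonglongrightarrow> L"
proof (rule tendstoI)
  fix r :: real assume "0 < r"
  have "\<forall>\<^sub>F n in sequentially. b n < b (Suc n) \<and> \<bar>(a (Suc n) - a n) / (b (Suc n) - b n) - L\<bar> < r / 2"
    using incr tendstoD[OF lim, of "r / 2"] \<open>0 < r\<close> by (auto simp: dist_real_def elim: eventually_elim2)
  then obtain C where C: "\<forall>\<^sub>F n in sequentially. \<bar>a n - L * b n\<bar> \<le> C + r / 2 * b n"
    by (rule linear_bound_from_increment_ratio)
  have "\<forall>\<^sub>F n in sequentially. C / b n < r / 2"
    using order_tendstoD(2)[OF tendsto_divide_0[OF tendsto_const filterlim_at_top_imp_at_infinity[OF b]]]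
      \<open>0 < r\<close> by simp
  with C filterlim_at_top_dense[THEN iffD1, OF b, rule_format, of 0]
  show "\<forall>\<^sub>F n in sequentially. dist (a n / b n) L < r"
  proof eventually_elim
    case (elim n)
    have "dist (a n / b n) L = \<bar>(a n - L * b n) / b n\<bar>"
      unfolding dist_real_def using elim by (simp add: diff_divide_distrib)
    also have "\<dots> = \<bar>a n - L * b n\<bar> / b n"
      using elim by simp
    also have "\<dots> \<le> (C + r / 2 * b n) / b n"
      using elim by (simp add: divide_right_mono)
    also have "\<dots> = C / b n + r / 2"
      using elim by (simp add: add_divide_distrib)
    also have "\<dots> < r"
      using elim by linarith
    finally show ?case .
  qed
qed

lemma tendsto_ratio_perturbed:
  fixes x y e f :: "'a \<Rightarrow> real"
  assumes "((\<lambda>n. x n / y n) \<longlongrightarrow> L) F"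
    and "((\<lambda>n. e n / y n) \<longlongrightarrow> 0) F" "((\<lambda>n. f n / y n) \<longlongrightarrow> 0) F"
    and "\<forall>\<^sub>F n in F. 0 < y n"
  shows "((\<lambda>n. (x n + e n) / (y n + f n)) \<longlongrightarrow> L) F"
proof -
  have "((\<lambda>n. (x n / y n + e n / y n) / (1 + f n / y n)) \<longlongrightarrow> (L + 0) / (1 + 0)) F"
    using assms(1-3) by (intro tendsto_intros) auto
  moreover have "\<forall>\<^sub>F n in F. (x n / y n + e n / y n) / (1 + f n / y n) = (x n + e n) / (y n + f n)"
    using assms(4)
  proof eventually_elim
    case (elim n)
    have "(x n / y n + e n / y n) / (1 + f n / y n) = ((x n + e n) / y n) / ((y n + f n) / y n)"
      using elim by (simp add: field_simps)
    also have "\<dots> = (x n + e n) / (y n + f n)"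
      using elim by simp
    finally show ?case .
  qed
  ultimately show ?thesis
    by (simp add: tendsto_cong)
qed

section \<open>Factorial blocks\<close>

definition fact_block :: "real set \<Rightarrow> nat \<Rightarrow> real set" where
  "fact_block \<Lambda> m = (\<lambda>x. fact m + x) ` window \<Lambda> m"

definition fact_blocks_below :: "real set \<Rightarrow> nat \<Rightarrow> real set" where
  "fact_blocks_below \<Lambda> M = (\<Union>m\<in>{3..<M}. fact_block \<Lambda> m)"

(* Block m lies in [m! - m, m! + m], so the blocks before boundary_block n lie inside [-n,n]. *)
definition boundary_block :: "nat \<Rightarrow> nat" where
  "boundary_block n = (LEAST m. 3 \<le> m \<and> n < fact m + m)"

lemma fact_block_bounds:
  "x \<in> fact_block \<Lambda> m \<Longrightarrow> fact m - real m \<le> x \<and> x \<le> fact m + real m"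
  unfolding fact_block_def window_def by auto

lemma fact_gap:
  assumes "3 \<le> m" "m < m'"
  shows "fact m + m + 2 * m' \<le> (fact m' :: nat)"
proof -
  obtain j where j: "m' = Suc j" "m \<le> j"
    using assms(2) by (cases m') auto
  have "fact m \<le> (fact j :: nat)"
    using j(2) by (rule fact_mono)
  moreover have "6 \<le> (fact j :: nat)"
    using fact_mono[of 3 j] assms(1) j(2) by (simp add: fact_numeral)
  then have "6 * j \<le> j * fact j" by simp
  moreover have "fact m' = fact j + j * (fact j :: nat)"
    using j(1) by simp
  ultimately show ?thesis
    using j assms(1) by linarith
qed

lemma fact_block_separated:
  assumes "3 \<le> m" "m < m'" "x \<in> fact_block \<Lambda> m" "y \<in> fact_block \<Lambda> m'"
  shows "real m' \<le> y - x"
proof -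
  have "real (fact m + m + 2 * m') \<le> real (fact m')"
    using fact_gap[OF assms(1,2)] by (simp only: of_nat_le_iff)
  then show ?thesis
    using fact_block_bounds[OF assms(3)] fact_block_bounds[OF assms(4)] by simp
qed

lemma fact_blocks_below_separated:
  "x \<in> fact_blocks_below \<Lambda> M \<Longrightarrow> y \<in> fact_block \<Lambda> M \<Longrightarrow> real M \<le> y - x"
  unfolding fact_blocks_below_def using fact_block_separated by auto

lemma fact_block_Ints:
  assumes "\<Lambda> \<subseteq> \<int>"
  shows "fact_block \<Lambda> m \<subseteq> \<int>"
proof -
  have "(fact m :: real) \<in> \<int>"
    by (metis Ints_of_nat of_nat_fact)
  then show ?thesis
    using assms unfolding fact_block_def window_def by (auto intro: Ints_add)
qed

lemma finite_fact_block: "\<Lambda> \<subseteq> \<int> \<Longrightarrow> finite (fact_block \<Lambda> m)"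
  unfolding fact_block_def by (simp add: finite_window)

lemma card_fact_block: "card (fact_block \<Lambda> m) = card (window \<Lambda> m)"
  unfolding fact_block_def by (rule card_image) (simp add: inj_on_def)

lemma diff_sum_fact_block: "diff_sum (fact_block \<Lambda> m) \<phi> = diff_sum (window \<Lambda> m) \<phi>"
  unfolding fact_block_def by (rule diff_sum_translate)

lemma finite_fact_blocks_below: "\<Lambda> \<subseteq> \<int> \<Longrightarrow> finite (fact_blocks_below \<Lambda> M)"
  unfolding fact_blocks_below_def by (simp add: finite_fact_block)

lemma fact_blocks_below_Suc:
  "3 \<le> M \<Longrightarrow> fact_blocks_below \<Lambda> (Suc M) = fact_blocks_below \<Lambda> M \<union> fact_block \<Lambda> M"
  unfolding fact_blocks_below_def by (auto simp: less_Suc_eq)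

lemma fact_blocks_below_disjoint:
  "0 < M \<Longrightarrow> fact_blocks_below \<Lambda> M \<inter> fact_block \<Lambda> M = {}"
  using fact_blocks_below_separated by fastforce

lemma boundary_block:
  shows "3 \<le> boundary_block n" "n < fact (boundary_block n) + boundary_block n"
    and "\<And>m. 3 \<le> m \<Longrightarrow> m < boundary_block n \<Longrightarrow> fact m + m \<le> n"
proof -
  have "3 \<le> boundary_block n \<and> n < fact (boundary_block n) + boundary_block n"
    unfolding boundary_block_def by (rule LeastI[of _ "n + 3"]) simp
  then show "3 \<le> boundary_block n" "n < fact (boundary_block n) + boundary_block n"
    by auto
  show "fact m + m \<le> n" if "3 \<le> m" "m < boundary_block n" for m
    using not_less_Least[of m "\<lambda>m. 3 \<le> m \<and> n < fact m + m"] that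
    unfolding boundary_block_def by auto
qed

lemma filterlim_boundary_block: "filterlim boundary_block at_top sequentially"
  unfolding filterlim_at_top
proof
  fix M0
  have "M0 \<le> boundary_block n" if "fact M0 + M0 \<le> n" for n
  proof (rule ccontr)
    assume "\<not> M0 \<le> boundary_block n"
    then have "boundary_block n \<le> M0" by simp
    then have "fact (boundary_block n) \<le> (fact M0 :: nat)"
      by (rule fact_mono)
    then have "fact (boundary_block n) + boundary_block n \<le> (fact M0 :: nat) + M0"
      using \<open>boundary_block n \<le> M0\<close> by linarith
    then show False
      using boundary_block(2)[of n] that by simp
  qed
  then show "\<forall>\<^sub>F n in sequentially. M0 \<le> boundary_block n"
    by (auto simp: eventually_sequentially)
qed

lemma window_fact_blocks:
  fixes \<Lambda> :: "real set" and n :: nat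
  defines "M \<equiv> boundary_block n"
  shows "window (\<Union>m\<in>{3..}. fact_block \<Lambda> m) n
           = fact_blocks_below \<Lambda> M \<union> window (fact_block \<Lambda> M) n"
proof -
  have inside: "window (fact_block \<Lambda> m) n = fact_block \<Lambda> m" if "3 \<le> m" "m < M" for m
  proof -
    have "fact m + m \<le> n"
      using boundary_block(3) that unfolding M_def by blast
    then have "fact m + real m \<le> real n" "real m \<le> fact m"
      by (metis of_nat_add of_nat_fact of_nat_le_iff, metis fact_ge_self of_nat_fact of_nat_le_iff)
    then show ?thesis
      unfolding window_def using fact_block_bounds[of _ \<Lambda> m] by fastforce
  qed
  have outside: "window (fact_block \<Lambda> m) n = {}" if "M < m" for m
  proof -
    have "fact M + M + 2 * m \<le> fact m" "n < fact M + M"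
      using fact_gap[OF boundary_block(1) that[unfolded M_def]] boundary_block(2)[of n]
      unfolding M_def by auto
    then have "n + m < fact m" by linarith
    then have "real n + real m < fact m"
      by (metis of_nat_add of_nat_fact of_nat_less_iff)
    then show ?thesis
      unfolding window_def using fact_block_bounds[of _ \<Lambda> m] by fastforce
  qed
  have split: "{3..} = {3..<M} \<union> {M} \<union> {M<..}"
    using boundary_block(1)[of n] by (auto simp: M_def)
  have "window (\<Union>m\<in>{3..}. fact_block \<Lambda> m) n = (\<Union>m\<in>{3..}. window (fact_block \<Lambda> m) n)"
    unfolding window_def by blast
  also have "\<dots> = (\<Union>m\<in>{3..<M}. window (fact_block \<Lambda> m) n) \<union> window (fact_block \<Lambda> M) n
        \<union> (\<Union>m\<in>{M<..}. window (fact_block \<Lambda> m) n)"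
    unfolding split by (simp only: UN_Un UN_insert UN_empty Un_empty_right)
  also have "\<dots> = fact_blocks_below \<Lambda> M \<union> window (fact_block \<Lambda> M) n"
    using inside outside unfolding fact_blocks_below_def by simp
  finally show ?thesis .
qed

lemma card_window_fact_block_le:
  "\<Lambda> \<subseteq> \<int> \<Longrightarrow> card (window (fact_block \<Lambda> M) n) \<le> 2 * M + 1"
  using card_mono[OF finite_fact_block, of \<Lambda> "window (fact_block \<Lambda> M) n" M]
    card_fact_block[of \<Lambda> M] card_window_le[of \<Lambda> M]
  unfolding window_def by auto

lemma card_window_fact_blocks_le:
  fixes n :: nat
  assumes "\<Lambda> \<subseteq> \<int>"
  defines "M \<equiv> boundary_block n"
  shows "card (window (\<Union>m\<in>{3..}. fact_block \<Lambda> m) n) \<le> (M + 1) * (2 * M + 1)"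
proof -
  have "card (fact_blocks_below \<Lambda> M) \<le> (\<Sum>m\<in>{3..<M}. card (fact_block \<Lambda> m))"
    unfolding fact_blocks_below_def by (rule card_UN_le) simp
  also have "\<dots> \<le> (\<Sum>m\<in>{3..<M}. 2 * M + 1)"
  proof (rule sum_mono)
    fix m assume "m \<in> {3..<M}"
    then show "card (fact_block \<Lambda> m) \<le> 2 * M + 1"
      using card_window_le[OF assms(1), of m] by (simp add: card_fact_block)
  qed
  also have "\<dots> \<le> M * (2 * M + 1)"
    using mult_le_mono1[of "M - 3" M "2 * M + 1"] by simp
  finally have below: "card (fact_blocks_below \<Lambda> M) \<le> M * (2 * M + 1)" .
  have "card (window (\<Union>m\<in>{3..}. fact_block \<Lambda> m) n)
      \<le> card (fact_blocks_below \<Lambda> M) + card (window (fact_block \<Lambda> M) n)"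
    unfolding M_def window_fact_blocks by (rule card_Un_le)
  also have "\<dots> \<le> M * (2 * M + 1) + (2 * M + 1)"
    using below card_window_fact_block_le[OF assms(1)] by (rule add_mono)
  finally show ?thesis
    by (simp add: algebra_simps)
qed

lemma square_over_fact_tendsto_0: "(\<lambda>k. real ((k + 2)\<^sup>2) / fact k) \<longlonglongrightarrow> 0"
proof (rule Lim_null_comparison)
  show "(\<lambda>k. 16 * (4 ^ k / fact k)) \<longlonglongrightarrow> (0 :: real)"
    using summable_LIMSEQ_zero[OF summable_exp[of "4 :: real"]]
    by (intro tendsto_mult_right_zero) (simp add: divide_inverse mult.commute)
  have "real ((k + 2)\<^sup>2) \<le> 16 * 4 ^ k" for k
  proof -
    have "(k + 2)\<^sup>2 \<le> (2 ^ (k + 2))\<^sup>2"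
      using less_exp[of "k + 2"] by (intro power_mono) auto
    also have "\<dots> = (2\<^sup>2) ^ (k + 2)"
      by (simp only: power_even_eq[symmetric] power_mult)
    also have "\<dots> = 16 * 4 ^ k"
      by simp
    finally show ?thesis
      by (metis of_nat_le_iff of_nat_mult of_nat_numeral of_nat_power)
  qed
  then show "\<forall>\<^sub>F k in sequentially. norm (real ((k + 2)\<^sup>2) / fact k) \<le> 16 * (4 ^ k / fact k)"
    by (intro always_eventually allI) (simp add: divide_right_mono)
qed

lemma card_window_fact_blocks_over_length_le:
  fixes n :: nat
  assumes "\<Lambda> \<subseteq> \<int>" "4 \<le> boundary_block n"
  defines "k \<equiv> boundary_block n - 1"
  shows "real (card (window (\<Union>m\<in>{3..}. fact_block \<Lambda> m) n)) / (2 * real n) \<le> real ((k + 2)\<^sup>2) / fact k"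
proof -
  have M: "boundary_block n = k + 1" "3 \<le> k"
    using assms(2) unfolding k_def by auto
  have "fact k + k \<le> n"
    using boundary_block(3)[of k n] M by simp
  then have n: "fact k \<le> real n"
    by (metis le_add1 le_trans of_nat_fact of_nat_le_iff)
  have "(boundary_block n + 1) * (2 * boundary_block n + 1) = (k + 2) * (2 * k + 3)"
    using M(1) by (simp add: algebra_simps)
  then have "card (window (\<Union>m\<in>{3..}. fact_block \<Lambda> m) n) \<le> (k + 2) * (2 * k + 3)"
    using card_window_fact_blocks_le[OF assms(1), of n] by simp
  also have "\<dots> \<le> (k + 2) * (2 * (k + 2))"
    by (intro mult_le_mono2) simp
  also have "\<dots> = 2 * (k + 2)\<^sup>2"
    by (simp add: power2_eq_square)
  finally have "real (card (window (\<Union>m\<in>{3..}. fact_block \<Lambda> m) n)) \<le> 2 * real ((k + 2)\<^sup>2)"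
    by (metis of_nat_le_iff of_nat_mult of_nat_numeral)
  then have "real (card (window (\<Union>m\<in>{3..}. fact_block \<Lambda> m) n)) / (2 * real n)
      \<le> 2 * real ((k + 2)\<^sup>2) / (2 * fact k)"
    using n by (intro frac_le) auto
  then show ?thesis
    by simp
qed

lemma density_fact_blocks:
  assumes "\<Lambda> \<subseteq> \<int>"
  shows "has_density (\<Union>m\<in>{3..}. fact_block \<Lambda> m) 0"
  unfolding has_density_def
proof (rule Lim_null_comparison)
  let ?k = "\<lambda>n. boundary_block n - 1"
  show "(\<lambda>n. real ((?k n + 2)\<^sup>2) / fact (?k n)) \<longlonglongrightarrow> 0"
    using filterlim_compose[OF square_over_fact_tendsto_0
        filterlim_compose[OF filterlim_minus_const_nat_at_top filterlim_boundary_block]] .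
  have "\<forall>\<^sub>F n in sequentially. 4 \<le> boundary_block n"
    using filterlim_boundary_block by (simp add: filterlim_at_top)
  then show "\<forall>\<^sub>F n in sequentially.
      norm (real (card (window (\<Union>m\<in>{3..}. fact_block \<Lambda> m) n)) / (2 * real n))
        \<le> real ((?k n + 2)\<^sup>2) / fact (?k n)"
  proof eventually_elim
    case (elim n)
    then show ?case
      using card_window_fact_blocks_over_length_le[OF assms elim] by simp
  qed
qed

section \<open>The counting autocorrelation\<close>

lemma card_fact_blocks_below_Un:
  assumes "\<Lambda> \<subseteq> \<int>" "0 < M" "W \<subseteq> fact_block \<Lambda> M"
  shows "card (fact_blocks_below \<Lambda> M \<union> W) = card (fact_blocks_below \<Lambda> M) + card W"
  using fact_blocks_below_disjoint[OF assms(2), of \<Lambda>] assms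
  by (intro card_Un_disjoint finite_fact_blocks_below finite_subset[OF assms(3) finite_fact_block]) auto

lemma diff_sum_fact_blocks_below_Un:
  assumes "\<Lambda> \<subseteq> \<int>" "K < M" "\<And>x. real K < \<bar>x\<bar> \<Longrightarrow> \<phi> x = 0" "W \<subseteq> fact_block \<Lambda> M"
  shows "diff_sum (fact_blocks_below \<Lambda> M \<union> W) \<phi> = diff_sum (fact_blocks_below \<Lambda> M) \<phi> + diff_sum W \<phi>"
proof (rule diff_sum_Un_separated)
  show "finite (fact_blocks_below \<Lambda> M)" "finite W"
    using assms(1) finite_subset[OF assms(4) finite_fact_block] by (auto simp: finite_fact_blocks_below)
  show "fact_blocks_below \<Lambda> M \<inter> W = {}"
    using fact_blocks_below_disjoint[of M \<Lambda>] assms(2,4) by auto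
  fix x y assume "x \<in> fact_blocks_below \<Lambda> M" "y \<in> W"
  then have "real K < y - x"
    using fact_blocks_below_separated assms(2,4) by force
  then show "\<phi> (x - y) = 0 \<and> \<phi> (y - x) = 0"
    using assms(3) by auto
qed

lemma card_fact_blocks_below_Suc:
  assumes "\<Lambda> \<subseteq> \<int>" "3 \<le> M"
  shows "card (fact_blocks_below \<Lambda> (Suc M)) = card (fact_blocks_below \<Lambda> M) + card (window \<Lambda> M)"
  using card_fact_blocks_below_Un[OF assms(1) _ order_refl, of M] assms(2)
  by (simp add: fact_blocks_below_Suc[OF assms(2)] card_fact_block)

lemma diff_sum_fact_blocks_below_Suc:
  assumes "\<Lambda> \<subseteq> \<int>" "3 \<le> M" "K < M" "\<And>x. real K < \<bar>x\<bar> \<Longrightarrow> \<phi> x = 0"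
  shows "diff_sum (fact_blocks_below \<Lambda> (Suc M)) \<phi>
           = diff_sum (fact_blocks_below \<Lambda> M) \<phi> + diff_sum (window \<Lambda> M) \<phi>"
  using diff_sum_fact_blocks_below_Un[OF assms(1,3,4) order_refl]
  by (simp add: fact_blocks_below_Suc[OF assms(2)] diff_sum_fact_block)

lemma filterlim_card_fact_blocks_below:
  assumes "\<Lambda> \<subseteq> \<int>" "has_density \<Lambda> c" "0 < c"
  shows "filterlim (\<lambda>M. real (card (fact_blocks_below \<Lambda> M))) at_top sequentially"
proof -
  have "filterlim (\<lambda>M. real (card (fact_blocks_below \<Lambda> (Suc M)))) at_top sequentially"
  proof (rule filterlim_at_top_mono[OF filterlim_card_window[OF assms(2,3)]])
    show "\<forall>\<^sub>F M in sequentially. real (card (window \<Lambda> M)) \<le> real (card (fact_blocks_below \<Lambda> (Suc M)))"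
      using eventually_ge_at_top[of 3] by eventually_elim (simp add: card_fact_blocks_below_Suc[OF assms(1)])
  qed
  then show ?thesis
    by (rule iffD1[OF filterlim_sequentially_Suc])
qed

lemma card_fact_blocks_below_eventually_less_Suc:
  assumes "\<Lambda> \<subseteq> \<int>" "has_density \<Lambda> c" "0 < c"
  shows "\<forall>\<^sub>F M in sequentially.
           real (card (fact_blocks_below \<Lambda> M)) < real (card (fact_blocks_below \<Lambda> (Suc M)))"
  using eventually_ge_at_top[of 3]
    filterlim_card_window[OF assms(2,3), unfolded filterlim_at_top_dense, rule_format, of 0]
  by eventually_elim (simp add: card_fact_blocks_below_Suc[OF assms(1)])

lemma fact_blocks_below_index_over_card:
  assumes "\<Lambda> \<subseteq> \<int>" "has_density \<Lambda> c" "0 < c"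
  shows "(\<lambda>M. real M / real (card (fact_blocks_below \<Lambda> M))) \<longlonglongrightarrow> 0"
proof (rule Stolz_Cesaro[OF card_fact_blocks_below_eventually_less_Suc[OF assms]
      filterlim_card_fact_blocks_below[OF assms]])
  have "\<forall>\<^sub>F M in sequentially. inverse (real (card (window \<Lambda> M))) =
      (real (Suc M) - real M) /
      (real (card (fact_blocks_below \<Lambda> (Suc M))) - real (card (fact_blocks_below \<Lambda> M)))"
    using eventually_ge_at_top[of 3]
    by eventually_elim (simp add: card_fact_blocks_below_Suc[OF assms(1)] divide_inverse)
  with tendsto_inverse_0_at_top[OF filterlim_card_window[OF assms(2,3)]]
  show "(\<lambda>M. (real (Suc M) - real M) /
      (real (card (fact_blocks_below \<Lambda> (Suc M))) - real (card (fact_blocks_below \<Lambda> M)))) \<longlonglongrightarrow> 0"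
    by (rule Lim_transform_eventually)
qed

lemma fact_blocks_below_ratio:
  assumes "\<Lambda> \<subseteq> \<int>" "\<And>x. real K < \<bar>x\<bar> \<Longrightarrow> \<phi> x = 0"
    and lim: "(\<lambda>m. diff_sum (window \<Lambda> m) \<phi> / (2 * real m)) \<longlonglongrightarrow> I"
    and dens: "has_density \<Lambda> c" "0 < c"
  shows "(\<lambda>M. diff_sum (fact_blocks_below \<Lambda> M) \<phi> / real (card (fact_blocks_below \<Lambda> M))) \<longlonglongrightarrow> I / c"
proof (rule Stolz_Cesaro[OF card_fact_blocks_below_eventually_less_Suc[OF assms(1) dens]
      filterlim_card_fact_blocks_below[OF assms(1) dens]])
  have "(\<lambda>m. (diff_sum (window \<Lambda> m) \<phi> / (2 * real m)) / (real (card (window \<Lambda> m)) / (2 * real m)))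
      \<longlonglongrightarrow> I / c"
    using lim dens unfolding has_density_def by (intro tendsto_divide) auto
  moreover have "\<forall>\<^sub>F M in sequentially.
      (diff_sum (window \<Lambda> M) \<phi> / (2 * real M)) / (real (card (window \<Lambda> M)) / (2 * real M)) =
      (diff_sum (fact_blocks_below \<Lambda> (Suc M)) \<phi> - diff_sum (fact_blocks_below \<Lambda> M) \<phi>) /
      (real (card (fact_blocks_below \<Lambda> (Suc M))) - real (card (fact_blocks_below \<Lambda> M)))"
    using eventually_ge_at_top[of "max 3 (K + 1)"]
  proof eventually_elim
    case (elim M)
    then have "3 \<le> M" "K < M" by auto
    then show ?case
      by (simp add: card_fact_blocks_below_Suc[OF assms(1)]
          diff_sum_fact_blocks_below_Suc[OF assms(1) _ _ assms(2)])
  qed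
  ultimately show "(\<lambda>M. (diff_sum (fact_blocks_below \<Lambda> (Suc M)) \<phi> - diff_sum (fact_blocks_below \<Lambda> M) \<phi>) /
      (real (card (fact_blocks_below \<Lambda> (Suc M))) - real (card (fact_blocks_below \<Lambda> M)))) \<longlonglongrightarrow> I / c"
    by (rule Lim_transform_eventually)
qed

lemma fact_blocks_below_boundary_over_card:
  assumes "\<Lambda> \<subseteq> \<int>" "has_density \<Lambda> c" "0 < c"
  shows "(\<lambda>M. real (2 * M + 1) / real (card (fact_blocks_below \<Lambda> M))) \<longlonglongrightarrow> 0"
proof -
  let ?B = "\<lambda>M. real (card (fact_blocks_below \<Lambda> M))"
  have "(\<lambda>M. 2 * (real M / ?B M) + inverse (?B M)) \<longlonglongrightarrow> 2 * 0 + 0"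
    using fact_blocks_below_index_over_card[OF assms] filterlim_card_fact_blocks_below[OF assms]
    by (intro tendsto_intros tendsto_inverse_0_at_top)
  moreover have "2 * (real M / ?B M) + inverse (?B M) = real (2 * M + 1) / ?B M" for M
    by (simp add: divide_inverse algebra_simps)
  ultimately show ?thesis
    by simp
qed

lemma abs_diff_sum_window_fact_block_le:
  assumes "\<Lambda> \<subseteq> \<int>" "\<And>x. real K < \<bar>x\<bar> \<Longrightarrow> \<phi> x = 0" "\<And>x. \<bar>\<phi> x\<bar> \<le> B"
  shows "\<bar>diff_sum (window (fact_block \<Lambda> M) n) \<phi>\<bar> \<le> real (2 * M + 1) * (real (2 * K + 1) * B)"
proof -
  have "window (fact_block \<Lambda> M) n \<subseteq> \<int>" "finite (window (fact_block \<Lambda> M) n)"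
    using fact_block_Ints[OF assms(1)] finite_fact_block[OF assms(1)]
    unfolding window_def by (auto intro: finite_subset)
  then have "\<bar>diff_sum (window (fact_block \<Lambda> M) n) \<phi>\<bar>
      \<le> real (card (window (fact_block \<Lambda> M) n)) * (real (2 * K + 1) * B)"
    by (rule abs_diff_sum_le[OF _ _ assms(2,3)])
  also have "\<dots> \<le> real (2 * M + 1) * (real (2 * K + 1) * B)"
    using card_window_fact_block_le[OF assms(1)] assms(3)[of 0]
    by (intro mult_right_mono) (simp_all only: of_nat_le_iff, simp)
  finally show ?thesis .
qed

(* This also covers F = {}, because x / 0 = 0. *)
lemma gamma_fin_eq: "gamma_fin F \<phi> = diff_sum F \<phi> / real (card F)"
  by (simp add: gamma_fin_def diff_sum_def)

lemma gamma_fin_window_fact_blocks_eq: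
  fixes n :: nat
  assumes "\<Lambda> \<subseteq> \<int>" "K < boundary_block n" "\<And>x. real K < \<bar>x\<bar> \<Longrightarrow> \<phi> x = 0"
  defines "M \<equiv> boundary_block n"
  defines "W \<equiv> window (fact_block \<Lambda> M) n"
  shows "gamma_fin (window (\<Union>m\<in>{3..}. fact_block \<Lambda> m) n) \<phi>
           = (diff_sum (fact_blocks_below \<Lambda> M) \<phi> + diff_sum W \<phi>)
             / (real (card (fact_blocks_below \<Lambda> M)) + real (card W))"
proof -
  have W: "W \<subseteq> fact_block \<Lambda> M" and "K < M" "0 < M"
    using assms(2) unfolding M_def W_def window_def by auto
  then show ?thesis
    unfolding gamma_fin_eq window_fact_blocks M_def[symmetric] W_def[symmetric]
    using diff_sum_fact_blocks_below_Un[OF assms(1) \<open>K < M\<close> assms(3) W]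
      card_fact_blocks_below_Un[OF assms(1) \<open>0 < M\<close> W]
    by simp
qed

lemma boundary_block_negligible:
  assumes "\<Lambda> \<subseteq> \<int>" "has_density \<Lambda> c" "0 < c" "\<And>n. \<bar>e n\<bar> \<le> D * real (2 * boundary_block n + 1)"
  shows "(\<lambda>n. e n / real (card (fact_blocks_below \<Lambda> (boundary_block n)))) \<longlonglongrightarrow> 0"
proof (rule Lim_null_comparison)
  let ?B = "\<lambda>n. real (card (fact_blocks_below \<Lambda> (boundary_block n)))"
  show "(\<lambda>n. D * (real (2 * boundary_block n + 1) / ?B n)) \<longlonglongrightarrow> 0"
    using fact_blocks_below_boundary_over_card[OF assms(1-3)] filterlim_boundary_block
    by (intro tendsto_mult_right_zero) (rule filterlim_compose)
  have "norm (e n / ?B n) \<le> D * (real (2 * boundary_block n + 1) / ?B n)" for n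
    using divide_right_mono[OF assms(4)[of n], of "?B n"] by (simp add: abs_divide)
  then show "\<forall>\<^sub>F n in sequentially. norm (e n / ?B n) \<le> D * (real (2 * boundary_block n + 1) / ?B n)"
    by (intro always_eventually allI)
qed

lemma gamma_fin_window_fact_blocks_tendsto:
  assumes "\<Lambda> \<subseteq> \<int>" "test_fun \<phi>"
    and lim: "(\<lambda>m. diff_sum (window \<Lambda> m) \<phi> / (2 * real m)) \<longlonglongrightarrow> I"
    and dens: "has_density \<Lambda> c" "0 < c"
  shows "(\<lambda>n. gamma_fin (window (\<Union>m\<in>{3..}. fact_block \<Lambda> m) n) \<phi>) \<longlonglongrightarrow> I / c"
proof -
  obtain K :: nat and Bd where supp: "\<And>x. real K < \<bar>x\<bar> \<Longrightarrow> \<phi> x = 0" and bound: "\<And>x. \<bar>\<phi> x\<bar> \<le> Bd"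
    using test_fun_boundedE[OF assms(2)] by blast
  define M where "M = boundary_block"
  define W where "W n = window (fact_block \<Lambda> (M n)) n" for n
  define B where "B m = real (card (fact_blocks_below \<Lambda> m))" for m
  have M_lim: "filterlim M at_top sequentially"
    unfolding M_def by (rule filterlim_boundary_block)
  have "(\<lambda>n. (diff_sum (fact_blocks_below \<Lambda> (M n)) \<phi> + diff_sum (W n) \<phi>) /
      (B (M n) + real (card (W n)))) \<longlonglongrightarrow> I / c"
  proof (rule tendsto_ratio_perturbed)
    show "(\<lambda>n. diff_sum (fact_blocks_below \<Lambda> (M n)) \<phi> / B (M n)) \<longlonglongrightarrow> I / c"
      using fact_blocks_below_ratio[OF assms(1) supp lim dens] M_lim
      unfolding B_def by (rule filterlim_compose)
    have "real (card (W n)) \<le> real (2 * M n + 1)" for n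
      using card_window_fact_block_le[OF assms(1)] unfolding W_def by (simp only: of_nat_le_iff)
    then show "(\<lambda>n. real (card (W n)) / B (M n)) \<longlonglongrightarrow> 0"
      unfolding M_def W_def B_def by (intro boundary_block_negligible[OF assms(1) dens, of _ 1]) simp
    have "\<bar>diff_sum (W n) \<phi>\<bar> \<le> real (2 * K + 1) * Bd * real (2 * M n + 1)" for n
      using abs_diff_sum_window_fact_block_le[where K = K and \<phi> = \<phi>, OF assms(1) supp bound]
      unfolding W_def by (metis mult.commute)
    then show "(\<lambda>n. diff_sum (W n) \<phi> / B (M n)) \<longlonglongrightarrow> 0"
      unfolding M_def W_def B_def by (rule boundary_block_negligible[OF assms(1) dens])
    show "\<forall>\<^sub>F n in sequentially. 0 < B (M n)"
      using filterlim_at_top_dense[THEN iffD1,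
          OF filterlim_compose[OF filterlim_card_fact_blocks_below[OF assms(1) dens] M_lim], rule_format, of 0]
      unfolding B_def .
  qed
  moreover have "\<forall>\<^sub>F n in sequentially. (diff_sum (fact_blocks_below \<Lambda> (M n)) \<phi> + diff_sum (W n) \<phi>) /
      (B (M n) + real (card (W n))) = gamma_fin (window (\<Union>m\<in>{3..}. fact_block \<Lambda> m) n) \<phi>"
    using M_lim[unfolded filterlim_at_top, rule_format, of "Suc K"]
  proof eventually_elim
    case (elim n)
    then have "K < boundary_block n" by (simp add: M_def)
    then show ?case
      unfolding M_def W_def B_def by (rule gamma_fin_window_fact_blocks_eq[OF assms(1) _ supp, symmetric])
  qed
  ultimately show ?thesis
    by (rule Lim_transform_eventually)
qed

lemma integral_scale_measure:
  fixes f :: "'a \<Rightarrow> real"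
  assumes "0 \<le> r" "f \<in> borel_measurable M"
  shows "integral\<^sup>L (scale_measure (ennreal r) M) f = r * integral\<^sup>L M f"
proof -
  have "scale_measure (ennreal r) M = density M (\<lambda>_. ennreal r)"
    by (rule measure_eqI) (auto simp: emeasure_density_const)
  moreover have "integral\<^sup>L (density M (\<lambda>_. ennreal r)) f = integral\<^sup>L M (\<lambda>x. r *\<^sub>R f x)"
    using assms by (intro integral_density) auto
  ultimately show ?thesis
    by simp
qed

lemma is_count_autocorr_fact_blocks:
  assumes "\<Lambda> \<subseteq> \<int>" "is_dens_autocorr \<Lambda> \<gamma>" "has_density \<Lambda> c" "0 < c"
  shows "is_count_autocorr (\<Union>m\<in>{3..}. fact_block \<Lambda> m) (scale_measure (ennreal (1 / c)) \<gamma>)"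
proof -
  have sets: "sets \<gamma> = sets borel" and fin: "\<And>K. compact K \<Longrightarrow> emeasure \<gamma> K < \<infinity>"
    and lim: "\<And>\<phi>. test_fun \<phi> \<Longrightarrow> (\<lambda>n. diff_sum (window \<Lambda> n) \<phi> / (2 * real n)) \<longlonglongrightarrow> integral\<^sup>L \<gamma> \<phi>"
    using assms(2) unfolding is_dens_autocorr_def vague_limit_def by auto
  show ?thesis
    unfolding is_count_autocorr_def vague_limit_def
  proof (intro conjI allI impI)
    show "sets (scale_measure (ennreal (1 / c)) \<gamma>) = sets borel"
      using sets by simp
    show "emeasure (scale_measure (ennreal (1 / c)) \<gamma>) K < \<infinity>" if "compact K" for K
      using fin[OF that] by (simp add: ennreal_mult_less_top)
    fix \<phi> assume "test_fun \<phi>"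
    then have "\<phi> \<in> borel_measurable \<gamma>"
      unfolding measurable_cong_sets[OF sets refl] test_fun_def
      by (auto intro: borel_measurable_continuous_onI)
    then show "(\<lambda>n. gamma_fin (window (\<Union>m\<in>{3..}. fact_block \<Lambda> m) n) \<phi>)
        \<longlonglongrightarrow> integral\<^sup>L (scale_measure (ennreal (1 / c)) \<gamma>) \<phi>"
      using gamma_fin_window_fact_blocks_tendsto[OF assms(1) \<open>test_fun \<phi>\<close> lim[OF \<open>test_fun \<phi>\<close>] assms(3,4)]
        assms(4)
      by (simp add: integral_scale_measure)
  qed
qed

theorem theorem6p1:
  fixes \<Lambda> :: "real set" and \<gamma> :: "real measure"
  assumes "\<Lambda> \<subseteq> \<int>"
    and "rel_dense \<Lambda>"
    and "is_dens_autocorr \<Lambda> \<gamma>"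
  defines "\<Gamma> \<equiv> (\<Union>n\<in>{3::nat..}. (\<lambda>x. fact n + x) ` window \<Lambda> n)"
  shows "has_density \<Gamma> 0 \<and>
         has_density \<Lambda> (measure \<gamma> {0}) \<and>
         measure \<gamma> {0} \<noteq> 0 \<and>
         is_count_autocorr \<Gamma> (scale_measure (ennreal (1 / measure \<gamma> {0})) \<gamma>)"
proof -
  have \<Gamma>: "\<Gamma> = (\<Union>m\<in>{3..}. fact_block \<Lambda> m)"
    unfolding \<Gamma>_def fact_block_def ..
  have dens: "has_density \<Lambda> (measure \<gamma> {0})"
    using assms(1,3) by (rule is_dens_autocorr_density)
  moreover have pos: "0 < measure \<gamma> {0}"
    using assms(1,2) dens by (rule rel_dense_density_pos)
  moreover have "has_density \<Gamma> 0"
    unfolding \<Gamma> using assms(1) by (rule density_fact_blocks)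
  moreover have "is_count_autocorr \<Gamma> (scale_measure (ennreal (1 / measure \<gamma> {0})) \<gamma>)"
    unfolding \<Gamma> using assms(1,3) dens pos by (rule is_count_autocorr_fact_blocks)
  ultimately show ?thesis
    by simp
qed

end
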